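(* Let $f:X\to X$ be a piecewise contracting map on a compact, locally connected metric space $(X,d)$ with continuity pieces $X_1,\dots,X_N$, discontinuity set $\Delta$ and attractor $\Lambda$. If $\Delta=\emptyset$ or $d(\Lambda,\Delta)\neq0$, then there exists $n_0\ge1$ such that for every atom $A$ of generation $n\ge n_0$ there is $i\in\{1,\dots,N\}$ with $A\subset X_i$.
   Context: A map $f:X\to X$ on a compact, locally connected metric space $(X,d)$ is piecewise contracting if there are $N\ge2$ non-empty, pairwise disjoint open sets $X_1,\dots,X_N$ with $X=\bigcup_i\overline{X_i}$, a constant $\lambda\in(0,1)$ with $d(f(x),f(y))\le\lambda d(x,y)$ for all $x,y$ in the same $X_i$, and such that $\tilde X:=\bigcap_{n\ge0}f^{-n}(X\setminus\Delta)\neq\emptyset$, where $\Delta:=X\setminus\bigcup_iX_i$ ($f$ is arbitrary on $\Delta$). For $A\subset X$ let $F_i(A):=\overline{f(A\cap X_i)}$; an atom of generation $n\ge1$ is a set $F_{i_n}\circ\cdots\circ F_{i_1}(X)$ with $i_1,\dots,i_n\in\{1,\dots,N\}$; $\Lambda_n$ is the union of all atoms of generation $n$ and the attractor is $\Lambda:=\bigcap_{n\ge1}\Lambda_n$. Here $d(\Lambda,\Delta)=\inf\{d(x,y):x\in\Lambda,y\in\Delta\}$. *)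

theory Defs
  imports "HOL-Analysis.Analysis"
begin

definition disc_set :: "'a set \<Rightarrow> (nat \<Rightarrow> 'a set) \<Rightarrow> nat \<Rightarrow> 'a set" where
  "disc_set X Xs N = X - (\<Union>i\<in>{1..N}. Xs i)"

definition piecewise_contracting ::
  "'a::metric_space set \<Rightarrow> ('a \<Rightarrow> 'a) \<Rightarrow> (nat \<Rightarrow> 'a set) \<Rightarrow> nat \<Rightarrow> real \<Rightarrow> bool" where
  "piecewise_contracting X f Xs N lam \<longleftrightarrow>
     compact X \<and> locally connected X \<and> f ` X \<subseteq> X \<and> N \<ge> 2 \<and>
     (\<forall>i\<in>{1..N}. Xs i \<noteq> {} \<and> openin (top_of_set X) (Xs i)) \<and>
     (\<forall>i\<in>{1..N}. \<forall>j\<in>{1..N}. i \<noteq> j \<longrightarrow> Xs i \<inter> Xs j = {}) \<and>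
     X = (\<Union>i\<in>{1..N}. closure (Xs i)) \<and>
     0 < lam \<and> lam < 1 \<and>
     (\<forall>i\<in>{1..N}. \<forall>x\<in>Xs i. \<forall>y\<in>Xs i. dist (f x) (f y) \<le> lam * dist x y) \<and>
     (\<Inter>n. X \<inter> (f ^^ n) -` (X - disc_set X Xs N)) \<noteq> {}"

definition Fmap :: "('a::topological_space \<Rightarrow> 'a) \<Rightarrow> (nat \<Rightarrow> 'a set) \<Rightarrow> nat \<Rightarrow> 'a set \<Rightarrow> 'a set" where
  "Fmap f Xs i A = closure (f ` (A \<inter> Xs i))"

text \<open>Atom of generation n: F_{i_n} \<circ> ... \<circ> F_{i_1} (X), the list is = [i_1,...,i_n].\<close>
definition is_atom ::
  "'a::topological_space set \<Rightarrow> ('a \<Rightarrow> 'a) \<Rightarrow> (nat \<Rightarrow> 'a set) \<Rightarrow> nat \<Rightarrow> nat \<Rightarrow> 'a set \<Rightarrow> bool" where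
  "is_atom X f Xs N n A \<longleftrightarrow>
     (\<exists>is. length is = n \<and> set is \<subseteq> {1..N} \<and> A = foldl (\<lambda>B i. Fmap f Xs i B) X is)"

definition Lambda_n :: "'a::topological_space set \<Rightarrow> ('a \<Rightarrow> 'a) \<Rightarrow> (nat \<Rightarrow> 'a set) \<Rightarrow> nat \<Rightarrow> nat \<Rightarrow> 'a set" where
  "Lambda_n X f Xs N n = \<Union>{A. is_atom X f Xs N n A}"

definition attractor :: "'a::topological_space set \<Rightarrow> ('a \<Rightarrow> 'a) \<Rightarrow> (nat \<Rightarrow> 'a set) \<Rightarrow> nat \<Rightarrow> 'a set" where
  "attractor X f Xs N = (\<Inter>n\<in>{1..}. Lambda_n X f Xs N n)"

end

theory Submission
  imports Defs
begin

text \<open>Each map F_i contracts diameters by the factor lam, so atoms of generation n have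
  diameter at most lam^n diam X. The sets Lambda_n form a decreasing sequence of compact sets
  whose intersection lies in the attractor, hence misses the closure of the discontinuity set
  when the two are at positive distance; by compactness some Lambda_n1 misses that set
  altogether and is therefore covered by the relatively open pieces X_i. A Lebesgue number e
  of this cover works for every atom of large generation: such an atom lies in Lambda_n1 and
  has diameter below e.\<close>

abbreviation Fmap_iter ::
  "('a::topological_space \<Rightarrow> 'a) \<Rightarrow> (nat \<Rightarrow> 'a set) \<Rightarrow> 'a set \<Rightarrow> nat list \<Rightarrow> 'a set" where
  "Fmap_iter f Xs B is \<equiv> foldl (\<lambda>B i. Fmap f Xs i B) B is"

lemma Fmap_iter_subset:
  assumes "B \<subseteq> X" "closed X" "f ` X \<subseteq> X"
  shows "Fmap_iter f Xs B is \<subseteq> X"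
  using assms(1)
proof (induction "is" arbitrary: B)
  case (Cons i "is")
  have "Fmap f Xs i B \<subseteq> X"
    unfolding Fmap_def using Cons.prems assms(2,3) by (meson closure_minimal image_mono le_infI1 order_trans)
  then show ?case using Cons.IH by simp
qed simp

lemma closed_Fmap_iter: "closed B \<Longrightarrow> closed (Fmap_iter f Xs B is)"
  by (induction "is" arbitrary: B) (auto simp: Fmap_def)

lemma Fmap_iter_mono: "B \<subseteq> C \<Longrightarrow> Fmap_iter f Xs B is \<subseteq> Fmap_iter f Xs C is"
proof (induction "is" arbitrary: B C)
  case (Cons i "is")
  have "Fmap f Xs i B \<subseteq> Fmap f Xs i C"
    unfolding Fmap_def using Cons.prems by (intro closure_mono image_mono) auto
  then show ?case using Cons.IH by simp
qed simp

lemma diameter_le_metric: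
  fixes S :: "'a::metric_space set"
  assumes "0 \<le> d" "\<And>x y. x \<in> S \<Longrightarrow> y \<in> S \<Longrightarrow> dist x y \<le> d"
  shows "diameter S \<le> d"
  using assms unfolding diameter_def by (auto intro!: cSUP_least)

lemma diameter_image_le:
  fixes f :: "'a::metric_space \<Rightarrow> 'b::metric_space"
  assumes "bounded B" "0 \<le> L" "\<And>x y. x \<in> B \<Longrightarrow> y \<in> B \<Longrightarrow> dist (f x) (f y) \<le> L * dist x y"
  shows "diameter (f ` B) \<le> L * diameter B"
proof (rule diameter_le_metric)
  show "0 \<le> L * diameter B"
    using assms(2) diameter_ge_0[OF assms(1)] by simp
  fix u v assume "u \<in> f ` B" "v \<in> f ` B"
  then obtain x y where "x \<in> B" "y \<in> B" "u = f x" "v = f y"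
    by blast
  then show "dist u v \<le> L * diameter B"
    using assms(3)[of x y] diameter_bounded_bound[OF assms(1), of x y] assms(2)
    by (metis mult_left_mono order_trans)
qed

lemma diameter_Fmap_le:
  fixes X :: "'a::metric_space set"
  assumes "B \<subseteq> X" "bounded X" "f ` X \<subseteq> X" "0 \<le> lam"
    and "\<And>x y. x \<in> Xs i \<Longrightarrow> y \<in> Xs i \<Longrightarrow> dist (f x) (f y) \<le> lam * dist x y"
  shows "diameter (Fmap f Xs i B) \<le> lam * diameter B"
proof -
  have "bounded (f ` (B \<inter> Xs i))"
    using assms(1,3) by (blast intro: bounded_subset[OF assms(2)])
  then have "diameter (Fmap f Xs i B) = diameter (f ` (B \<inter> Xs i))"
    unfolding Fmap_def by (rule diameter_closure)
  also have "\<dots> \<le> lam * diameter (B \<inter> Xs i)"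
    using assms by (intro diameter_image_le) (auto intro: bounded_subset)
  also have "\<dots> \<le> lam * diameter B"
    using assms(1,2,4) by (intro mult_left_mono diameter_subset) (auto intro: bounded_subset)
  finally show ?thesis .
qed

lemma diameter_Fmap_iter_le:
  fixes X :: "'a::metric_space set"
  assumes "B \<subseteq> X" "bounded X" "closed X" "f ` X \<subseteq> X" "0 \<le> lam"
    and "\<And>i x y. i \<in> set is \<Longrightarrow> x \<in> Xs i \<Longrightarrow> y \<in> Xs i \<Longrightarrow> dist (f x) (f y) \<le> lam * dist x y"
  shows "diameter (Fmap_iter f Xs B is) \<le> lam ^ length is * diameter B"
  using assms(1,6)
proof (induction "is" arbitrary: B)
  case (Cons i "is")
  have "Fmap f Xs i B \<subseteq> X"
    using Fmap_iter_subset[of B X f Xs "[i]"] Cons.prems(1) assms(3,4) by simp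
  moreover have "\<And>j x y. j \<in> set is \<Longrightarrow> x \<in> Xs j \<Longrightarrow> y \<in> Xs j \<Longrightarrow> dist (f x) (f y) \<le> lam * dist x y"
    by (rule Cons.prems(2)) auto
  ultimately have "diameter (Fmap_iter f Xs B (i # is)) \<le> lam ^ length is * diameter (Fmap f Xs i B)"
    using Cons.IH by simp
  also have "\<dots> \<le> lam ^ length is * (lam * diameter B)"
    using Cons.prems assms(2,4,5) by (intro mult_left_mono diameter_Fmap_le) auto
  finally show ?case by (simp add: mult_ac)
qed simp

lemma is_atom_iff: "is_atom X f Xs N n A \<longleftrightarrow>
    (\<exists>is. length is = n \<and> set is \<subseteq> {1..N} \<and> A = Fmap_iter f Xs X is)"
  unfolding is_atom_def ..

lemma atom_subset_Lambda_n: "is_atom X f Xs N n A \<Longrightarrow> A \<subseteq> Lambda_n X f Xs N n"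
  unfolding Lambda_n_def by blast

lemma Lambda_n_eq:
  "Lambda_n X f Xs N n = (\<Union>is\<in>{is. set is \<subseteq> {1..N} \<and> length is = n}. Fmap_iter f Xs X is)"
  unfolding Lambda_n_def is_atom_def by auto

lemma Lambda_n_subset:
  assumes "closed X" "f ` X \<subseteq> X"
  shows "Lambda_n X f Xs N n \<subseteq> X"
  unfolding Lambda_n_eq using Fmap_iter_subset[OF order_refl assms] by blast

lemma compact_Lambda_n:
  fixes X :: "'a::t2_space set"
  assumes "compact X" "f ` X \<subseteq> X"
  shows "compact (Lambda_n X f Xs N n)"
proof -
  have "closed (Lambda_n X f Xs N n)"
    unfolding Lambda_n_eq using compact_imp_closed[OF assms(1)]
    by (intro closed_Union) (auto intro: finite_lists_length_eq closed_Fmap_iter)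
  moreover have "Lambda_n X f Xs N n \<subseteq> X"
    using Lambda_n_subset compact_imp_closed[OF assms(1)] assms(2) by blast
  ultimately show ?thesis
    using compact_Int_closed[OF assms(1)] by (metis inf.absorb_iff2)
qed

lemma Lambda_n_Suc_subset:
  assumes "closed X" "f ` X \<subseteq> X"
  shows "Lambda_n X f Xs N (Suc n) \<subseteq> Lambda_n X f Xs N n"
proof
  fix x assume "x \<in> Lambda_n X f Xs N (Suc n)"
  then obtain i "is" where "is": "i \<in> {1..N}" "set is \<subseteq> {1..N}" "length is = n"
    and x: "x \<in> Fmap_iter f Xs (Fmap f Xs i X) is"
    unfolding Lambda_n_eq by (auto simp: length_Suc_conv)
  have "Fmap f Xs i X \<subseteq> X"
    using Fmap_iter_subset[of X X f Xs "[i]"] assms by simp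
  then have "x \<in> Fmap_iter f Xs X is"
    using x Fmap_iter_mono by blast
  with "is" show "x \<in> Lambda_n X f Xs N n"
    unfolding Lambda_n_eq by blast
qed

lemma decseq_Lambda_n:
  assumes "closed X" "f ` X \<subseteq> X"
  shows "decseq (Lambda_n X f Xs N)"
  using Lambda_n_Suc_subset[OF assms] by (rule decseq_SucI)

lemma setdist_nonzero_imp_disjoint_closure: "setdist S T \<noteq> 0 \<Longrightarrow> S \<inter> closure T = {}"
  by (metis disjoint_iff setdist_closure_2 setdist_eq_0I)

lemma decseq_compact_eventually_disjoint:
  fixes K :: "nat \<Rightarrow> 'a::t2_space set"
  assumes "decseq K" "\<And>n. compact (K n)" "(\<Inter>n. K n) \<inter> closure D = {}"
  obtains n where "K n \<inter> D = {}"
proof (rule ccontr)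
  assume "\<not> thesis"
  with that have meet: "K n \<inter> D \<noteq> {}" for n by blast
  have "K 0 \<inter> (\<Inter>n\<in>UNIV. K n \<inter> closure D) \<noteq> {}"
  proof (rule compact_imp_fip_image[OF assms(2)])
    show "closed (K n \<inter> closure D)" for n
      using assms(2) compact_imp_closed by blast
    fix I :: "nat set" assume "finite I"
    define m where "m = Max (insert 0 I)"
    have "n \<le> m" if "n \<in> insert 0 I" for n
      using \<open>finite I\<close> that unfolding m_def by simp
    then have "K m \<subseteq> K n" if "n \<in> insert 0 I" for n
      using assms(1) that by (simp add: decseqD)
    moreover obtain x where "x \<in> K m" "x \<in> D"
      using meet by blast
    ultimately show "K 0 \<inter> (\<Inter>n\<in>I. K n \<inter> closure D) \<noteq> {}"
      using closure_subset by blast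
  qed
  with assms(3) show False by blast
qed

lemma Lebesgue_number_lemma_openin:
  fixes S :: "'a::metric_space set"
  assumes "compact S" "S \<subseteq> X" "I \<noteq> {}" "S \<subseteq> (\<Union>i\<in>I. V i)"
    and "\<And>i. i \<in> I \<Longrightarrow> openin (top_of_set X) (V i)"
  obtains e where "0 < e" "\<And>T. T \<subseteq> S \<Longrightarrow> diameter T < e \<Longrightarrow> \<exists>i\<in>I. T \<subseteq> V i"
proof -
  have "\<forall>i\<in>I. \<exists>U. open U \<and> V i = X \<inter> U"
    using assms(5) unfolding openin_open by blast
  from bchoice[OF this] obtain U where U: "\<forall>i\<in>I. open (U i) \<and> V i = X \<inter> U i"
    by blast
  have "U ` I \<noteq> {}"
    using assms(3) by simp
  moreover have "S \<subseteq> \<Union>(U ` I)"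
  proof
    fix x assume "x \<in> S"
    then obtain i where "i \<in> I" "x \<in> V i"
      using assms(4) by blast
    then show "x \<in> \<Union>(U ` I)"
      using U by auto
  qed
  ultimately show thesis
  proof (rule Lebesgue_number_lemma[OF assms(1)])
    show "open G" if "G \<in> U ` I" for G
      using that U by auto
    fix e assume "0 < e" and e: "\<And>T. T \<subseteq> S \<Longrightarrow> diameter T < e \<Longrightarrow> \<exists>G\<in>U ` I. T \<subseteq> G"
    show thesis
    proof (rule that[OF \<open>0 < e\<close>])
      fix T assume T: "T \<subseteq> S" "diameter T < e"
      then obtain i where "i \<in> I" "T \<subseteq> U i"
        using e by blast
      moreover have "T \<subseteq> X"
        using T(1) assms(2) by blast
      ultimately show "\<exists>i\<in>I. T \<subseteq> V i"
        using U by auto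
    qed
  qed
qed

theorem lemma1:
  fixes X :: "'a::metric_space set" and f :: "'a \<Rightarrow> 'a" and Xs :: "nat \<Rightarrow> 'a set"
    and N :: nat and lam :: real
  assumes "piecewise_contracting X f Xs N lam"
    and "disc_set X Xs N = {} \<or> setdist (attractor X f Xs N) (disc_set X Xs N) \<noteq> 0"
  shows "\<exists>n0\<ge>1. \<forall>n\<ge>n0. \<forall>A. is_atom X f Xs N n A \<longrightarrow> (\<exists>i\<in>{1..N}. A \<subseteq> Xs i)"
proof -
  define D where "D = disc_set X Xs N"
  define \<Lambda> where "\<Lambda> = Lambda_n X f Xs N"
  have X: "compact X" "f ` X \<subseteq> X" "N \<ge> 2" "0 \<le> lam" "lam < 1"
    and pieces: "\<And>i. i \<in> {1..N} \<Longrightarrow> openin (top_of_set X) (Xs i)"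
    and contr: "\<And>i x y. i \<in> {1..N} \<Longrightarrow> x \<in> Xs i \<Longrightarrow> y \<in> Xs i \<Longrightarrow> dist (f x) (f y) \<le> lam * dist x y"
    using assms(1) unfolding piecewise_contracting_def by auto
  have \<Lambda>: "decseq \<Lambda>" "\<And>n. compact (\<Lambda> n)" "\<And>n. \<Lambda> n \<subseteq> X"
    unfolding \<Lambda>_def using X(1,2) compact_imp_closed[OF X(1)]
    by (simp_all add: compact_Lambda_n decseq_Lambda_n Lambda_n_subset)
  have "(\<Inter>n. \<Lambda> n) \<subseteq> attractor X f Xs N"
    unfolding \<Lambda>_def attractor_def by blast
  then have "(\<Inter>n. \<Lambda> n) \<inter> closure D = {}"
    using assms(2) setdist_nonzero_imp_disjoint_closure[of "attractor X f Xs N" D]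
    unfolding D_def by auto
  then obtain n1 where "\<Lambda> n1 \<inter> D = {}"
    using decseq_compact_eventually_disjoint[OF \<Lambda>(1,2)] by blast
  then have cover: "\<Lambda> n1 \<subseteq> (\<Union>i\<in>{1..N}. Xs i)"
    using \<Lambda>(3) unfolding D_def disc_set_def by blast
  have "{1..N} \<noteq> {}"
    using X(3) by simp
  then obtain e where "0 < e"
    and e: "\<And>T. T \<subseteq> \<Lambda> n1 \<Longrightarrow> diameter T < e \<Longrightarrow> \<exists>i\<in>{1..N}. T \<subseteq> Xs i"
    using Lebesgue_number_lemma_openin[OF \<Lambda>(2,3) _ cover pieces] by blast
  have lim: "(\<lambda>n. lam ^ n * diameter X) \<longlonglongrightarrow> 0"
    using X(4,5) by (intro tendsto_mult_left_zero LIMSEQ_power_zero) simp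
  obtain n2 where n2: "\<And>n. n \<ge> n2 \<Longrightarrow> lam ^ n * diameter X < e"
    using order_tendstoD(2)[OF lim \<open>0 < e\<close>] unfolding eventually_sequentially by blast
  have "\<exists>i\<in>{1..N}. A \<subseteq> Xs i" if n: "n \<ge> max n1 n2" and atom: "is_atom X f Xs N n A" for n A
  proof (rule e)
    show "A \<subseteq> \<Lambda> n1"
      using atom_subset_Lambda_n[OF atom] decseqD[OF \<Lambda>(1), of n1 n] n
      unfolding \<Lambda>_def by auto
    obtain "is" where "is": "length is = n" "set is \<subseteq> {1..N}" and A: "A = Fmap_iter f Xs X is"
      using atom unfolding is_atom_iff by blast
    have "diameter A \<le> lam ^ n * diameter X"
      unfolding A "is"(1)[symmetric]
      using compact_imp_bounded[OF X(1)] compact_imp_closed[OF X(1)] X(2,4) contr "is"(2)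
      by (intro diameter_Fmap_iter_le[OF order_refl]) auto
    also have "\<dots> < e"
      using n2 n by simp
    finally show "diameter A < e" .
  qed
  then show ?thesis
    by (intro exI[of _ "max 1 (max n1 n2)"]) auto
qed

end
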